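(* Let $s \geq 1$, $\Pi \subset [s]$, and $u \in \mathbb{Z}$ with $|\Pi| > u \geq 0$, let $v \in \mathbb{Z}$, and let $\Gamma, \alpha \in \mathbb{Z}^s$. Then \[ \sum_{\substack{\sigma \in \mathfrak{S}_s \\ M \subset \Pi}} (-1)^{|M|} \operatorname{sgn}(\sigma)\, \Delta_s(\sigma \cdot^\alpha \Gamma - 1_M) \binom{v - |M| + u}{u} = 0, \] where $\binom{v - |M| + u}{u}$ denotes the polynomial $\frac{1}{u!}\prod_{i=1}^u (v - |M| + i)$.
   Context: For $\sigma \in \mathfrak{S}_s$ and $\Gamma = (\gamma_1,\ldots,\gamma_s), \alpha = (\alpha_1, \ldots, \alpha_s) \in \mathbb{Z}^s$, $\sigma \cdot^\alpha \Gamma \in \mathbb{Z}^s$ has $\ell$-th entry $\gamma_{\sigma^{-1}(\ell)} + \alpha_{\sigma^{-1}(\ell)} - \alpha_\ell$. $\Delta_s(y_1, \ldots, y_s) = \prod_{1 \leq v < w \leq s}(y_w - y_v)$. $1_M \in \{0,1\}^s$ is the indicator vector of $M \subset [s]$. *)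

theory Defs
  imports "HOL-Combinatorics.Combinatorics"
begin

text \<open>Vectors in Z^s are modelled as functions nat => int, only entries 1..s matter.\<close>

definition perm_act :: "(nat \<Rightarrow> int) \<Rightarrow> (nat \<Rightarrow> nat) \<Rightarrow> (nat \<Rightarrow> int) \<Rightarrow> (nat \<Rightarrow> int)" where
  "perm_act \<alpha> \<sigma> \<Gamma> = (\<lambda>l. \<Gamma> (inv \<sigma> l) + \<alpha> (inv \<sigma> l) - \<alpha> l)"

definition Vandermonde :: "nat \<Rightarrow> (nat \<Rightarrow> int) \<Rightarrow> int" where
  "Vandermonde s y = (\<Prod>v\<in>{1..s}. \<Prod>w\<in>{v<..s}. y w - y v)"

definition indicator_vec :: "nat set \<Rightarrow> nat \<Rightarrow> int" where
  "indicator_vec M = (\<lambda>l. if l \<in> M then 1 else 0)"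

definition poly_binom :: "int \<Rightarrow> nat \<Rightarrow> rat" where
  "poly_binom x u = (\<Prod>i\<in>{1..u}. of_int (x + int i)) / of_nat (fact u)"

end

theory Submission
  imports Defs
begin

text \<open>
  After the substitution \<open>\<sigma> \<mapsto> \<sigma>\<inverse>\<close>, the inner sum over \<open>\<sigma>\<close> is the alternating sum of
  \<open>\<Delta>\<^sub>s(a \<circ> \<sigma> - c)\<close> with \<open>a = \<Gamma> + \<alpha>\<close> and \<open>c = \<alpha> + 1\<^sub>M\<close>. Expanding the Vandermonde product in
  \<open>c\<close>, every term except \<open>\<Delta>\<^sub>s(a \<circ> \<sigma>)\<close> has degree less than \<open>s(s-1)/2\<close> in the \<open>a (\<sigma> l)\<close>;
  each of its monomials then has two equal exponents, so it is killed by the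
  corresponding transposition. Hence the inner sum does not depend on \<open>M\<close>, and what
  remains is the \<open>|\<Pi>|\<close>-th finite difference of the polynomial \<open>k \<mapsto> binom(v - k + u, u)\<close> of
  degree \<open>u < |\<Pi>|\<close>, which vanishes.
\<close>

lemma sum_lessThan_card_le_sum:
  fixes A :: "nat set"
  assumes "finite A"
  shows "(\<Sum>i<card A. i) \<le> \<Sum>A"
  using assms
proof (induction "card A" arbitrary: A)
  case 0
  then show ?case by simp
next
  case (Suc n)
  define m where "m = Max A"
  have "A \<noteq> {}" using Suc.hyps by auto
  then have "m \<in> A" using Suc.prems m_def by simp
  have "A \<subseteq> {0..m}" using Suc.prems m_def by auto
  then have "card A \<le> Suc m" using card_mono[of "{0..m}"] by simp
  then have "n \<le> m" using Suc.hyps by simp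
  have "card (A - {m}) = n" using Suc.hyps(2) \<open>m \<in> A\<close> by simp
  then have "(\<Sum>i<n. i) \<le> \<Sum>(A - {m})" using Suc.hyps(1)[of "A - {m}"] Suc.prems by simp
  moreover have "\<Sum>A = m + \<Sum>(A - {m})" using Suc.prems \<open>m \<in> A\<close> by (simp add: sum.remove)
  ultimately show ?case using \<open>n \<le> m\<close> Suc.hyps(2)[symmetric] by simp
qed

lemma sum_lessThan_card_le_sum_inj_on:
  fixes j :: "'a \<Rightarrow> nat"
  assumes "finite S" "inj_on j S"
  shows "(\<Sum>i<card S. i) \<le> (\<Sum>l\<in>S. j l)"
  using sum_lessThan_card_le_sum[of "j ` S"] assms by (simp add: sum.reindex card_image)

lemma sum_sign_permutes_eq_0_if_transpose_invariant:
  fixes f :: "('a \<Rightarrow> 'a) \<Rightarrow> int"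
  assumes "finite S" "x \<in> S" "y \<in> S" "x \<noteq> y"
    and invariant: "\<And>\<sigma>. \<sigma> permutes S \<Longrightarrow> f (\<sigma> \<circ> transpose x y) = f \<sigma>"
  shows "(\<Sum>\<sigma>\<in>{\<sigma>. \<sigma> permutes S}. sign \<sigma> * f \<sigma>) = 0"
proof -
  let ?t = "transpose x y"
  have t: "?t permutes S" using assms by (simp add: permutes_swap_id)
  have "sign (\<sigma> \<circ> ?t) * f (\<sigma> \<circ> ?t) = - (sign \<sigma> * f \<sigma>)" if "\<sigma> permutes S" for \<sigma>
  proof -
    have "permutation \<sigma>" "permutation ?t"
      using that t \<open>finite S\<close> permutation_permutes by blast+
    then have "sign (\<sigma> \<circ> ?t) = - sign \<sigma>"
      using \<open>x \<noteq> y\<close> by (simp add: sign_compose sign_swap_id)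
    then show ?thesis using invariant[OF that] by simp
  qed
  then have "(\<Sum>\<sigma>\<in>{\<sigma>. \<sigma> permutes S}. sign \<sigma> * f \<sigma>) = - (\<Sum>\<sigma>\<in>{\<sigma>. \<sigma> permutes S}. sign \<sigma> * f \<sigma>)"
    using sum_permutations_compose_right[OF t, of "\<lambda>\<sigma>. sign \<sigma> * f \<sigma>"] by (simp add: sum_negf)
  then show ?thesis by simp
qed

lemma sum_sign_permutes_monomial_eq_0:
  fixes a :: "'a \<Rightarrow> int" and \<phi> :: "'b \<Rightarrow> 'a"
  assumes "finite S" "finite T" "\<phi> ` T \<subseteq> S" "card T < (\<Sum>i<card S. i)"
  shows "(\<Sum>\<sigma>\<in>{\<sigma>. \<sigma> permutes S}. sign \<sigma> * (\<Prod>p\<in>T. a (\<sigma> (\<phi> p)))) = 0"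
proof -
  define j where "j l = card {p \<in> T. \<phi> p = l}" for l
  have monomial: "(\<Prod>p\<in>T. a (\<sigma> (\<phi> p))) = (\<Prod>l\<in>S. a (\<sigma> l) ^ j l)" for \<sigma>
    using prod.group[OF assms(2,1,3), of "\<lambda>p. a (\<sigma> (\<phi> p))"] by (simp add: j_def)
  have "(\<Sum>l\<in>S. j l) = card T"
    using sum.group[OF assms(2,1,3), of "\<lambda>_. 1::nat"] by (simp add: j_def)
  then have "\<not> inj_on j S"
    using sum_lessThan_card_le_sum_inj_on[OF \<open>finite S\<close>] assms(4) by fastforce
  then obtain x y where "x \<in> S" "y \<in> S" "x \<noteq> y" "j x = j y"
    unfolding inj_on_def by blast
  have "(\<Prod>l\<in>S. a ((\<sigma> \<circ> transpose x y) l) ^ j l) = (\<Prod>l\<in>S. a (\<sigma> l) ^ j l)"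
    if "\<sigma> permutes S" for \<sigma>
  proof -
    have "(\<Prod>l\<in>S. a ((\<sigma> \<circ> transpose x y) l) ^ j l)
        = (\<Prod>l\<in>S. a (\<sigma> (transpose x y l)) ^ j (transpose x y l))"
      using \<open>j x = j y\<close> by (intro prod.cong) (auto simp: transpose_def)
    also have "\<dots> = (\<Prod>l\<in>S. a (\<sigma> l) ^ j l)"
      using prod.permute[of "transpose x y" S "\<lambda>l. a (\<sigma> l) ^ j l"] \<open>x \<in> S\<close> \<open>y \<in> S\<close>
      by (simp add: permutes_swap_id comp_def)
    finally show ?thesis .
  qed
  then show ?thesis
    unfolding monomial
    by (intro sum_sign_permutes_eq_0_if_transpose_invariant) (use assms \<open>x \<in> S\<close> \<open>y \<in> S\<close> \<open>x \<noteq> y\<close> in auto)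
qed

lemma sum_sign_permutes_prod_diff_eq_0:
  fixes a :: "'a \<Rightarrow> int" and v w :: "'b \<Rightarrow> 'a"
  assumes "finite S" "finite T" "v ` T \<subseteq> S" "w ` T \<subseteq> S" "card T < (\<Sum>i<card S. i)"
  shows "(\<Sum>\<sigma>\<in>{\<sigma>. \<sigma> permutes S}. sign \<sigma> * (\<Prod>p\<in>T. a (\<sigma> (w p)) - a (\<sigma> (v p)))) = 0"
proof -
  define \<phi> where "\<phi> X p = (if p \<in> X then w p else v p)" for X p
  have expand: "(\<Prod>p\<in>T. a (\<sigma> (w p)) - a (\<sigma> (v p)))
      = (\<Sum>X\<in>Pow T. (-1) ^ (card T - card X) * (\<Prod>p\<in>T. a (\<sigma> (\<phi> X p))))" for \<sigma>
  proof -
    have "(\<Prod>p\<in>X. a (\<sigma> (w p))) * (\<Prod>p\<in>T - X. a (\<sigma> (v p))) = (\<Prod>p\<in>T. a (\<sigma> (\<phi> X p)))"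
      if "X \<subseteq> T" for X
      using prod.If_cases[OF \<open>finite T\<close>, of "\<lambda>p. p \<in> X" "\<lambda>p. a (\<sigma> (w p))" "\<lambda>p. a (\<sigma> (v p))"] that
      by (simp add: \<phi>_def if_distrib Int_absorb1 Diff_eq)
    then show ?thesis
      by (simp add: prod_diff_conv_sum'[OF \<open>finite T\<close>] mult.assoc)
  qed
  have "(\<Sum>\<sigma>\<in>{\<sigma>. \<sigma> permutes S}. sign \<sigma> * (\<Prod>p\<in>T. a (\<sigma> (\<phi> X p)))) = 0" for X
    by (rule sum_sign_permutes_monomial_eq_0) (use assms in \<open>auto simp: \<phi>_def\<close>)
  then have "(\<Sum>X\<in>Pow T. (-1) ^ (card T - card X) *
      (\<Sum>\<sigma>\<in>{\<sigma>. \<sigma> permutes S}. sign \<sigma> * (\<Prod>p\<in>T. a (\<sigma> (\<phi> X p))))) = 0"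
    by simp
  then show ?thesis
    unfolding expand by (simp add: sum_distrib_left sum.swap[of _ "Pow T"] mult.left_commute)
qed

definition Vandermonde_pairs :: "nat \<Rightarrow> (nat \<times> nat) set" where
  "Vandermonde_pairs s = Sigma {1..s} (\<lambda>v. {v<..s})"

lemma finite_Vandermonde_pairs [simp]: "finite (Vandermonde_pairs s)"
  unfolding Vandermonde_pairs_def by simp

lemma card_Vandermonde_pairs: "card (Vandermonde_pairs s) = (\<Sum>i<s. i)"
proof -
  have "card (Vandermonde_pairs s) = (\<Sum>v\<in>{1..s}. s - v)"
    unfolding Vandermonde_pairs_def by (simp add: card_SigmaI)
  also have "\<dots> = (\<Sum>i<s. i)"
    by (rule sum.reindex_bij_witness[of _ "\<lambda>i. s - i" "\<lambda>v. s - v"]) auto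
  finally show ?thesis .
qed

lemma Vandermonde_eq_prod_pairs:
  "Vandermonde s y = (\<Prod>p\<in>Vandermonde_pairs s. y (snd p) - y (fst p))"
  unfolding Vandermonde_def Vandermonde_pairs_def by (simp add: prod.Sigma case_prod_beta)

lemma sum_sign_permutes_Vandermonde_shift:
  fixes a c :: "nat \<Rightarrow> int"
  shows "(\<Sum>\<sigma>\<in>{\<sigma>. \<sigma> permutes {1..s}}. sign \<sigma> * Vandermonde s (\<lambda>l. a (\<sigma> l) - c l))
       = (\<Sum>\<sigma>\<in>{\<sigma>. \<sigma> permutes {1..s}}. sign \<sigma> * Vandermonde s (\<lambda>l. a (\<sigma> l)))"
proof -
  let ?P = "Vandermonde_pairs s"
  let ?S = "{\<sigma>. \<sigma> permutes {1..s}}"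
  let ?A = "\<lambda>X. \<Sum>\<sigma>\<in>?S. sign \<sigma> * (\<Prod>p\<in>X. a (\<sigma> (snd p)) - a (\<sigma> (fst p)))"
  define g where "g X = (\<Prod>p\<in>?P - X. c (fst p) - c (snd p)) * ?A X" for X
  have "Vandermonde s (\<lambda>l. a (\<sigma> l) - c l)
      = (\<Prod>p\<in>?P. (a (\<sigma> (snd p)) - a (\<sigma> (fst p))) + (c (fst p) - c (snd p)))" for \<sigma>
    unfolding Vandermonde_eq_prod_pairs by (rule prod.cong) auto
  then have "(\<Sum>\<sigma>\<in>?S. sign \<sigma> * Vandermonde s (\<lambda>l. a (\<sigma> l) - c l)) = (\<Sum>X\<in>Pow ?P. g X)"
    unfolding g_def prod_add[OF finite_Vandermonde_pairs]
    by (simp add: sum_distrib_left sum_distrib_right sum.swap[of _ "Pow ?P"] mult_ac)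
  also have "\<dots> = (\<Sum>X\<in>{?P}. g X)"
  proof (rule sum.mono_neutral_right)
    show "\<forall>X\<in>Pow ?P - {?P}. g X = 0"
    proof
      fix X assume X: "X \<in> Pow ?P - {?P}"
      then have "card X < card ?P"
        by (auto intro: psubset_card_mono)
      then have "card X < (\<Sum>i<card {1..s}. i)"
        by (simp add: card_Vandermonde_pairs)
      then have "?A X = 0"
        using X by (intro sum_sign_permutes_prod_diff_eq_0)
          (auto simp: Vandermonde_pairs_def intro: finite_subset)
      then show "g X = 0" by (simp add: g_def)
    qed
  qed auto
  finally show ?thesis by (simp add: g_def Vandermonde_eq_prod_pairs)
qed

lemma sum_sign_permutes_Vandermonde_perm_act:
  fixes \<alpha> \<Gamma> c :: "nat \<Rightarrow> int"
  shows "(\<Sum>\<sigma>\<in>{\<sigma>. \<sigma> permutes {1..s}}. sign \<sigma> * Vandermonde s (\<lambda>l. perm_act \<alpha> \<sigma> \<Gamma> l - c l))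
       = (\<Sum>\<sigma>\<in>{\<sigma>. \<sigma> permutes {1..s}}. sign \<sigma> * Vandermonde s (\<lambda>l. \<Gamma> (\<sigma> l) + \<alpha> (\<sigma> l)))"
proof -
  have "sign (inv \<sigma>) * Vandermonde s (\<lambda>l. perm_act \<alpha> (inv \<sigma>) \<Gamma> l - c l)
      = sign \<sigma> * Vandermonde s (\<lambda>l. \<Gamma> (\<sigma> l) + \<alpha> (\<sigma> l) - (\<alpha> l + c l))"
    if "\<sigma> permutes {1..s}" for \<sigma>
  proof -
    have "inv (inv \<sigma>) = \<sigma>" using permutes_bij[OF that] by (simp add: inv_inv_eq)
    moreover have "sign (inv \<sigma>) = sign \<sigma>"
      using that sign_inverse permutation_permutes by (metis finite_atLeastAtMost)
    ultimately show ?thesis by (simp add: perm_act_def algebra_simps)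
  qed
  then have "(\<Sum>\<sigma>\<in>{\<sigma>. \<sigma> permutes {1..s}}. sign \<sigma> * Vandermonde s (\<lambda>l. perm_act \<alpha> \<sigma> \<Gamma> l - c l))
      = (\<Sum>\<sigma>\<in>{\<sigma>. \<sigma> permutes {1..s}}. sign \<sigma> * Vandermonde s (\<lambda>l. \<Gamma> (\<sigma> l) + \<alpha> (\<sigma> l) - (\<alpha> l + c l)))"
    by (subst sum_permutations_inverse) (rule sum.cong, auto)
  then show ?thesis
    using sum_sign_permutes_Vandermonde_shift[of s "\<lambda>l. \<Gamma> l + \<alpha> l"] by simp
qed

lemma poly_binom_eq_gbinomial: "poly_binom x u = (of_int x + of_nat u) gchoose u"
proof -
  have "(\<Prod>i\<in>{1..u}. (of_int (x + int i) :: rat)) = (\<Prod>i\<in>{0..<u}. of_int x + 1 + of_nat i)"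
    by (rule prod.reindex_bij_witness[of _ Suc "\<lambda>i. i - 1"]) auto
  then show ?thesis
    by (simp add: poly_binom_def gbinomial_pochhammer' pochhammer_prod)
qed

lemma poly_binom_Suc_diff: "poly_binom x (Suc u) - poly_binom (x - 1) (Suc u) = poly_binom x u"
  using gbinomial_Suc_Suc[of "of_int x + of_nat u :: rat" u]
  by (simp add: poly_binom_eq_gbinomial algebra_simps)

lemma sum_Pow_insert_alternating:
  fixes g :: "nat \<Rightarrow> 'a :: comm_ring_1"
  assumes "finite A" "x \<notin> A"
  shows "(\<Sum>M\<in>Pow (insert x A). (-1) ^ card M * g (card M))
       = (\<Sum>M\<in>Pow A. (-1) ^ card M * (g (card M) - g (Suc (card M))))"
proof -
  have "inj_on (insert x) (Pow A)"
    using assms(2) by (intro inj_onI) (metis PowD Diff_insert_absorb subsetD)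
  moreover have "card (insert x M) = Suc (card M)" if "M \<in> Pow A" for M
  proof -
    have "finite M" "x \<notin> M" using that assms finite_subset by auto
    then show ?thesis by simp
  qed
  moreover have "Pow A \<inter> insert x ` Pow A = {}" using assms(2) by auto
  ultimately show ?thesis
    using assms(1)
    by (simp add: Pow_insert sum.union_disjoint sum.reindex right_diff_distrib sum_subtractf sum_negf)
qed

lemma sum_Pow_alternating_poly_binom_eq_0:
  assumes "finite A" "u < card A"
  shows "(\<Sum>M\<in>Pow A. (-1) ^ card M * poly_binom (v - int (card M)) u) = 0"
  using assms
proof (induction u arbitrary: A)
  case (0 A)
  then obtain x where "x \<in> A" by fastforce
  then obtain B where A: "A = insert x B" "x \<notin> B" by (blast dest: mk_disjoint_insert)
  then have "finite B" using \<open>finite A\<close> by simp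
  show ?case
    unfolding A(1) sum_Pow_insert_alternating[OF \<open>finite B\<close> \<open>x \<notin> B\<close>, of "\<lambda>k. poly_binom (v - int k) 0"]
    by (simp add: poly_binom_def)
next
  case (Suc u A)
  then obtain x where "x \<in> A" by fastforce
  then obtain B where A: "A = insert x B" "x \<notin> B" by (blast dest: mk_disjoint_insert)
  have "finite B" "u < card B" using Suc.prems A by auto
  have "poly_binom (v - int k) (Suc u) - poly_binom (v - int (Suc k)) (Suc u) = poly_binom (v - int k) u"
    for k
    using poly_binom_Suc_diff[of "v - int k" u] by (simp add: algebra_simps)
  then show ?case
    unfolding A(1) sum_Pow_insert_alternating[OF \<open>finite B\<close> \<open>x \<notin> B\<close>, of "\<lambda>k. poly_binom (v - int k) (Suc u)"]
    using Suc.IH[OF \<open>finite B\<close> \<open>u < card B\<close>] by simp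
qed

theorem corollary6p4:
  fixes s u :: nat and Pi_set :: "nat set" and v :: int and \<Gamma> \<alpha> :: "nat \<Rightarrow> int"
  assumes "s \<ge> 1" and "Pi_set \<subseteq> {1..s}" and "card Pi_set > u"
  shows "(\<Sum>\<sigma>\<in>{\<sigma>. \<sigma> permutes {1..s}}. \<Sum>M\<in>Pow Pi_set.
            of_int ((-1) ^ card M * sign \<sigma> *
              Vandermonde s (\<lambda>l. perm_act \<alpha> \<sigma> \<Gamma> l - indicator_vec M l))
            * poly_binom (v - int (card M)) u) = (0::rat)"
proof -
  let ?S = "{\<sigma>. \<sigma> permutes {1..s}}"
  define K where "K = (\<Sum>\<sigma>\<in>?S. sign \<sigma> * Vandermonde s (\<lambda>l. \<Gamma> (\<sigma> l) + \<alpha> (\<sigma> l)))"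
  have "finite Pi_set" using assms(2) finite_subset by blast
  have inner: "(\<Sum>\<sigma>\<in>?S. sign \<sigma> * Vandermonde s (\<lambda>l. perm_act \<alpha> \<sigma> \<Gamma> l - indicator_vec M l)) = K"
    for M
    unfolding K_def by (rule sum_sign_permutes_Vandermonde_perm_act)
  have "(\<Sum>\<sigma>\<in>?S. \<Sum>M\<in>Pow Pi_set. of_int ((-1) ^ card M * sign \<sigma> *
            Vandermonde s (\<lambda>l. perm_act \<alpha> \<sigma> \<Gamma> l - indicator_vec M l)) * poly_binom (v - int (card M)) u)
      = (\<Sum>M\<in>Pow Pi_set. (-1) ^ card M * poly_binom (v - int (card M)) u *
            of_int (\<Sum>\<sigma>\<in>?S. sign \<sigma> * Vandermonde s (\<lambda>l. perm_act \<alpha> \<sigma> \<Gamma> l - indicator_vec M l)))"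
    by (subst sum.swap) (simp add: sum_distrib_left of_int_sum mult_ac)
  also have "\<dots> = (\<Sum>M\<in>Pow Pi_set. (-1) ^ card M * poly_binom (v - int (card M)) u) * of_int K"
    by (simp only: inner sum_distrib_right)
  also have "\<dots> = 0"
    using sum_Pow_alternating_poly_binom_eq_0[OF \<open>finite Pi_set\<close> assms(3)] by simp
  finally show ?thesis .
qed

end
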